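(* Let $q$ be a power of an odd prime, $q^n-1=ls$ with $l,s$ positive integers, $\gamma$ a primitive element of $\mathbb{F}_{q^n}$, $\xi=\gamma^s$, and $C_i=\gamma^i\{\gamma^{lj}:0\le j\le s-1\}$ for $0\le i\le l-1$. Let $r$ be a positive integer, $f\in\mathbb{F}_{q^n}[x]$, $A_i=f(\xi^{iq^r})$, and $S(x)=x^{q^r}f(x^{sq^r})$, so that $S(x)=A_ix^{q^r}$ for $x\in C_i$. Suppose $S$ is a scattered polynomial of index $t\in\{0,\dots,n-1\}$ over $\mathbb{F}_{q^n}$. If $y\in C_i$ and $z\in C_j$ ($0\le i,j\le l-1$) satisfy $S(y)/y^{q^t}=S(z)/z^{q^t}$, then $A_i=A_j$.
   Context: A polynomial (function) $S$ on $\mathbb{F}_{q^n}$ is a scattered polynomial of index $t$ over $\mathbb{F}_{q^n}$ if for all $y,z\in\mathbb{F}_{q^n}^*$, $\frac{S(y)}{y^{q^t}}=\frac{S(z)}{z^{q^t}}$ implies $y/z\in\mathbb{F}_q$. *)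

theory Defs
  imports "HOL-Computational_Algebra.Polynomial" "HOL-Library.Cardinality"
begin

text \<open>The ambient field F_{q^n} is a finite field type 'a with CARD('a) = q^n.
  The subfield F_q of F_{q^n} is the set of fixed points of the q-Frobenius.\<close>

definition subfield_Fq :: "nat \<Rightarrow> 'a::{field,finite} set" where
  "subfield_Fq q = {x. x ^ q = x}"

definition primitive_element :: "'a::{field,finite} \<Rightarrow> bool" where
  "primitive_element \<gamma> \<longleftrightarrow> (\<forall>x. x \<noteq> 0 \<longrightarrow> (\<exists>i::nat. x = \<gamma> ^ i))"

definition scattered :: "('a::{field,finite} \<Rightarrow> 'a) \<Rightarrow> nat \<Rightarrow> nat \<Rightarrow> bool" where
  "scattered S q t \<longleftrightarrow>
     (\<forall>y z. y \<noteq> 0 \<longrightarrow> z \<noteq> 0 \<longrightarrow> S y / y ^ (q ^ t) = S z / z ^ (q ^ t)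
        \<longrightarrow> y / z \<in> subfield_Fq q)"

definition coset_C :: "'a::{field,finite} \<Rightarrow> nat \<Rightarrow> nat \<Rightarrow> nat \<Rightarrow> 'a set" where
  "coset_C \<gamma> l s i = {\<gamma> ^ i * \<gamma> ^ (l * j) | j. j \<le> s - 1}"

end

theory Submission
  imports Defs
begin

text \<open>On the coset \<open>C\<^sub>i\<close> we have \<open>x\<^sup>s = \<xi>\<^sup>i\<close>, because \<open>\<gamma>\<^sup>l\<^sup>s = 1\<close>; hence \<open>S(x) = A\<^sub>i x\<^sup>q\<^sup>r\<close>
  there. If \<open>S(y)/y\<^sup>q\<^sup>t = S(z)/z\<^sup>q\<^sup>t\<close>, scatteredness gives \<open>y = c z\<close> with \<open>c \<in> \<bbbF>\<^sub>q\<close>, and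
  \<open>c\<close> is fixed by every power of the Frobenius, so it cancels from both sides and leaves
  \<open>A\<^sub>i = A\<^sub>j\<close>.\<close>

lemma power_power_eq_self:
  fixes x :: "'a::monoid_mult"
  assumes "x ^ q = x"
  shows "x ^ (q ^ m) = x"
proof (induction m)
  case (Suc m)
  have "x ^ (q ^ Suc m) = (x ^ q) ^ (q ^ m)"
    by (simp add: power_mult)
  with Suc assms show ?case by simp
qed simp

lemma power_card_minus_one_eq_one:
  fixes x :: "'a::{field,finite}"
  assumes "x \<noteq> 0"
  shows "x ^ (CARD('a) - 1) = 1"
proof -
  let ?U = "UNIV - {0::'a}"
  have "bij_betw ((*) x) ?U ?U"
    using assms by (intro bij_betw_byWitness[where f' = "\<lambda>y. y / x"]) auto
  then have "(\<Prod>y\<in>?U. x * y) = \<Prod>?U"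
    by (rule prod.reindex_bij_betw)
  moreover have "(\<Prod>y\<in>?U. x * y) = x ^ card ?U * \<Prod>?U"
    by (simp add: prod.distrib)
  moreover have "\<Prod>?U \<noteq> 0" and "card ?U = CARD('a) - 1"
    by (simp_all add: card_Diff_singleton)
  ultimately show ?thesis by simp
qed

text \<open>In \<open>\<bbbF>\<^sub>2\<close> the element \<open>0\<close> is primitive, since \<open>0 ^ 0 = 1\<close>.\<close>

lemma primitive_element_nonzero:
  fixes \<gamma> :: "'a::{field,finite}"
  assumes "primitive_element \<gamma>" and "CARD('a) \<noteq> 2"
  shows "\<gamma> \<noteq> 0"
proof
  assume "\<gamma> = 0"
  have "x \<in> {0, 1}" for x :: 'a
    using assms(1) \<open>\<gamma> = 0\<close> unfolding primitive_element_def by (metis insertI1 insertI2 power_0_left)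
  then have "UNIV = {0, 1::'a}" by blast
  then show False
    using assms(2) by (metis card_2_iff zero_neq_one)
qed

lemma coset_C_nonzero:
  assumes "\<gamma> \<noteq> 0" and "x \<in> coset_C \<gamma> l s m"
  shows "x \<noteq> 0"
  using assms unfolding coset_C_def by auto

lemma coset_C_power_eq:
  assumes "\<gamma> ^ (l * s) = 1" and "x \<in> coset_C \<gamma> l s m"
  shows "x ^ s = (\<gamma> ^ s) ^ m"
proof -
  obtain a where x: "x = \<gamma> ^ m * \<gamma> ^ (l * a)"
    using assms(2) unfolding coset_C_def by blast
  have "x ^ s = (\<gamma> ^ s) ^ m * (\<gamma> ^ (l * s)) ^ a"
    by (simp add: x power_mult_distrib flip: power_mult) (simp add: ac_simps)
  with assms(1) show ?thesis by simp
qed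

lemma scattered_coefficient_eq:
  fixes y z a b :: "'a::{field,finite}"
  assumes "scattered S q t" and "y \<noteq> 0" and "z \<noteq> 0"
    and "S y = a * y ^ (q ^ r)" and "S z = b * z ^ (q ^ r)"
    and "S y / y ^ (q ^ t) = S z / z ^ (q ^ t)"
  shows "a = b"
proof -
  define c where "c = y / z"
  have "c ^ q = c"
    using assms(1-3,6) unfolding c_def scattered_def subfield_Fq_def by blast
  then have c_r: "c ^ (q ^ r) = c" and c_t: "c ^ (q ^ t) = c"
    by (simp_all add: power_power_eq_self)
  have "y = c * z" and "c \<noteq> 0"
    using assms(2,3) by (simp_all add: c_def)
  with assms(4-6) have "c * (a * z ^ (q ^ r)) / (c * z ^ (q ^ t)) = b * z ^ (q ^ r) / z ^ (q ^ t)"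
    by (simp add: power_mult_distrib c_r c_t ac_simps)
  with \<open>c \<noteq> 0\<close> assms(3) show ?thesis
    by (simp add: divide_simps)
qed

theorem mainTheorem3:
  fixes p k q n l s r t i j :: nat
    and \<gamma> \<xi> y z :: "'a::{field,finite}"
    and f :: "'a poly"
    and S :: "'a \<Rightarrow> 'a"
    and A :: "nat \<Rightarrow> 'a"
  assumes "prime p" and "odd p" and "k > 0" and "q = p ^ k"
    and "n > 0" and "CARD('a) = q ^ n"
    and "l > 0" and "s > 0" and "q ^ n - 1 = l * s"
    and "primitive_element \<gamma>" and "\<xi> = \<gamma> ^ s"
    and "r > 0"
    and "\<And>m. A m = poly f (\<xi> ^ (m * q ^ r))"
    and "\<And>x. S x = x ^ (q ^ r) * poly f (x ^ (s * q ^ r))"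
    and "t \<le> n - 1" and "scattered S q t"
    and "i \<le> l - 1" and "j \<le> l - 1"
    and "y \<in> coset_C \<gamma> l s i" and "z \<in> coset_C \<gamma> l s j"
    and "S y / y ^ (q ^ t) = S z / z ^ (q ^ t)"
  shows "A i = A j"
proof -
  have "odd (CARD('a))"
    using assms(2,4,6) by simp
  then have "\<gamma> \<noteq> 0"
    using assms(10) primitive_element_nonzero by fastforce
  then have "\<gamma> ^ (l * s) = 1"
    using assms(6,9) power_card_minus_one_eq_one by metis
  have S_on_coset: "S x = A m * x ^ (q ^ r)" if "x \<in> coset_C \<gamma> l s m" for x m
  proof -
    have "x ^ (s * q ^ r) = \<xi> ^ (m * q ^ r)"
      using coset_C_power_eq[OF \<open>\<gamma> ^ (l * s) = 1\<close> that] assms(11)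
      by (simp add: power_mult)
    then show ?thesis using assms(13,14) by simp
  qed
  show ?thesis
    using scattered_coefficient_eq[OF assms(16) _ _ S_on_coset S_on_coset assms(21)]
      coset_C_nonzero[OF \<open>\<gamma> \<noteq> 0\<close>] assms(19,20) by blast
qed

end
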